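(* Let $N\ge1$ and let the parameter space $\Theta$ of the correlated Bernoulli random graph model be nondegenerate. Suppose $S:\mathcal{X}\to\mathbb{R}$ is an unbiased estimator of $g(\theta)$ and $S':\mathcal{X}\to\mathbb{R}$ is an unbiased estimator of $g'(\theta)$, where $g,g':\Theta\to\mathbb{R}$. Then for any $a,b\in\mathbb{R}$, $a\overline{S}+b\overline{S'}$ is the UMVU estimator of $ag(\theta)+bg'(\theta)$. Moreover, $a\overline{S}+b\overline{S'}$ is balanced, $\overline{S}\cdot\overline{S'}$ is balanced, and (if $\overline{S'}$ is nowhere zero) $\overline{S}/\overline{S'}$ is balanced.
   Context: Correlated Bernoulli random graph model: fix a positive integer $N$ and let $\mathcal{R}=\{(p_1,\dots,p_N,\varrho_1,\dots,\varrho_N): p_i,\varrho_i\in[0,1]\}$; a parameter space is any $\Theta\subseteq\mathcal{R}$. For $\theta\in\Theta$, the pairs $(X_i,Y_i)$, $i=1,\dots,N$, of $\{0,1\}$-valued random variables are independent, $X_i,Y_i$ are marginally Bernoulli$(p_i)$ with Pearson correlation $\varrho_i$. Sample space $\mathcal{X}=\{(x,y):x,y\in\{0,1\}^N\}$. Let $\mathcal{R}^o=\{(p_1,\dots,p_N,0,\dots,0):p_i\in\mathbb{R}\}$; $\Theta$ is nondegenerate if $\Theta\cap\mathcal{R}^o$ has an interior point relative to $\mathcal{R}^o$. The disagreement vector $\mathcal{H}:\mathcal{X}\to\{0,\star,1\}^N$ has $i$th component $1$ if $x_i=y_i=1$, $0$ if $x_i=y_i=0$, $\star$ if $x_i\neq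 y_i$; $\mathcal{X}_h=\mathcal{H}^{-1}(h)$. The balanced variant of a statistic $S$ is $\overline{S}(x,y)=\frac{1}{|\mathcal{X}_h|}\sum_{(x',y')\in\mathcal{X}_h}S(x',y')$ with $h=\mathcal{H}(x,y)$; $S$ is called balanced if $S=\overline{S}$, i.e. $S$ is constant on each $\mathcal{X}_h$. An estimator $S$ is unbiased for $g$ if $\mathbb{E}_\theta S=g(\theta)$ for all $\theta\in\Theta$; UMVU means unbiased with minimum variance among unbiased estimators for every $\theta\in\Theta$. *)

theory Defs
  imports Main "HOL-Analysis.Analysis"
begin

text \<open>Encoding: a sample (x,y) with x,y in {0,1}^N is a pair of functions nat => bool
  (True = 1) that vanish at indices i >= N. A parameter (p_1..p_N, rho_1..rho_N) is a pair
  of functions nat => real vanishing at indices i >= N.\<close>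

type_synonym sample = "(nat \<Rightarrow> bool) \<times> (nat \<Rightarrow> bool)"
type_synonym param = "(nat \<Rightarrow> real) \<times> (nat \<Rightarrow> real)"

definition sample_space :: "nat \<Rightarrow> sample set" where
  "sample_space N = {(x, y). \<forall>i\<ge>N. \<not> x i \<and> \<not> y i}"

definition param_space :: "nat \<Rightarrow> param set" where
  "param_space N = {(p, r). (\<forall>i<N. 0 \<le> p i \<and> p i \<le> 1 \<and> 0 \<le> r i \<and> r i \<le> 1)
                            \<and> (\<forall>i\<ge>N. p i = 0 \<and> r i = 0)}"

text \<open>Joint pmf of a pair of Bernoulli(p) variables with Pearson correlation r.\<close>
definition pair_prob :: "real \<Rightarrow> real \<Rightarrow> bool \<Rightarrow> bool \<Rightarrow> real" where
  "pair_prob p r a b =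
     (if a \<and> b then p\<^sup>2 + r * p * (1 - p)
      else if \<not> a \<and> \<not> b then (1 - p)\<^sup>2 + r * p * (1 - p)
      else p * (1 - p) * (1 - r))"

definition cb_prob :: "nat \<Rightarrow> param \<Rightarrow> sample \<Rightarrow> real" where
  "cb_prob N \<theta> z = (\<Prod>i<N. pair_prob (fst \<theta> i) (snd \<theta> i) (fst z i) (snd z i))"

definition expect :: "nat \<Rightarrow> param \<Rightarrow> (sample \<Rightarrow> real) \<Rightarrow> real" where
  "expect N \<theta> S = (\<Sum>z\<in>sample_space N. S z * cb_prob N \<theta> z)"

definition variance :: "nat \<Rightarrow> param \<Rightarrow> (sample \<Rightarrow> real) \<Rightarrow> real" where
  "variance N \<theta> S = expect N \<theta> (\<lambda>z. (S z - expect N \<theta> S)\<^sup>2)"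

definition unbiased :: "nat \<Rightarrow> param set \<Rightarrow> (sample \<Rightarrow> real) \<Rightarrow> (param \<Rightarrow> real) \<Rightarrow> bool" where
  "unbiased N \<Theta> S g = (\<forall>\<theta>\<in>\<Theta>. expect N \<theta> S = g \<theta>)"

definition umvu :: "nat \<Rightarrow> param set \<Rightarrow> (sample \<Rightarrow> real) \<Rightarrow> (param \<Rightarrow> real) \<Rightarrow> bool" where
  "umvu N \<Theta> S g = (unbiased N \<Theta> S g \<and>
     (\<forall>T. unbiased N \<Theta> T g \<longrightarrow> (\<forall>\<theta>\<in>\<Theta>. variance N \<theta> S \<le> variance N \<theta> T)))"

text \<open>Nondegeneracy: Theta \<inter> R^o has an interior point relative to R^o
  (R^o = {(p,0) : p in R^N}).\<close>
definition nondegenerate :: "nat \<Rightarrow> param set \<Rightarrow> bool" where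
  "nondegenerate N \<Theta> = (\<exists>p0 e. (\<forall>i\<ge>N. p0 i = 0) \<and> e > 0 \<and>
     (\<forall>p. (\<forall>i\<ge>N. p i = 0) \<and> (\<forall>i<N. \<bar>p i - p0 i\<bar> < e) \<longrightarrow> (p, \<lambda>_. 0) \<in> \<Theta>))"

text \<open>Disagreement vector: Some True = 1, Some False = 0, None = star.\<close>
definition disagreement :: "nat \<Rightarrow> sample \<Rightarrow> (nat \<Rightarrow> bool option)" where
  "disagreement N z = (\<lambda>i. if i < N then (if fst z i = snd z i then Some (fst z i) else None)
                          else Some False)"

definition fiber :: "nat \<Rightarrow> (nat \<Rightarrow> bool option) \<Rightarrow> sample set" where
  "fiber N h = {z \<in> sample_space N. disagreement N z = h}"

definition balanced_variant :: "nat \<Rightarrow> (sample \<Rightarrow> real) \<Rightarrow> sample \<Rightarrow> real" where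
  "balanced_variant N S z =
     (\<Sum>z'\<in>fiber N (disagreement N z). S z') / real (card (fiber N (disagreement N z)))"

definition balanced :: "nat \<Rightarrow> (sample \<Rightarrow> real) \<Rightarrow> bool" where
  "balanced N S = (\<forall>z\<in>sample_space N. S z = balanced_variant N S z)"

end

(* Under an uncorrelated parameter (p, 0) the pairs are independent and pair i shows
   (1,1), (0,0) and each of the two discordant outcomes with probability p_i^2, (1 - p_i)^2
   and p_i (1 - p_i). So if a function invariant under swapping x_i and y_i has zero
   expectation for all p in an open box, peeling off one coordinate at a time yields
   quadratics in p_j vanishing on an interval: the disagreement vector is complete.
   Every likelihood depends on the sample only through the disagreement vector, so the
   balanced variant is a conditional expectation; it preserves expectations and does not
   increase variance (Rao-Blackwell). By completeness, a balanced unbiased estimator agrees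
   with the balanced variant of any competitor, hence is UMVU (Lehmann-Scheffe). *)

theory Submission
  imports Defs
begin

definition sample_upd :: "sample \<Rightarrow> nat \<Rightarrow> bool \<Rightarrow> bool \<Rightarrow> sample" where
  "sample_upd z j a b = ((fst z)(j := a), (snd z)(j := b))"

definition sample_swap :: "nat \<Rightarrow> sample \<Rightarrow> sample" where
  "sample_swap j z = sample_upd z j (snd z j) (fst z j)"

definition samples_on :: "nat set \<Rightarrow> sample set" where
  "samples_on I = {z. \<forall>i. i \<notin> I \<longrightarrow> \<not> fst z i \<and> \<not> snd z i}"

definition indep_prob :: "nat set \<Rightarrow> (nat \<Rightarrow> real) \<Rightarrow> sample \<Rightarrow> real" where
  "indep_prob I p z = (\<Prod>i\<in>I. pair_prob (p i) 0 (fst z i) (snd z i))"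

lemma sample_upd_self: "sample_upd z j (fst z j) (snd z j) = z"
  by (simp add: sample_upd_def)

lemma sample_upd_upd_same: "sample_upd (sample_upd z j a b) j c d = sample_upd z j c d"
  by (simp add: sample_upd_def)

lemma sample_upd_swap_commute:
  "i \<noteq> j \<Longrightarrow> sample_upd (sample_swap i z) j a b = sample_swap i (sample_upd z j a b)"
  by (auto simp: sample_upd_def sample_swap_def fun_eq_iff)

lemma sample_upd_swap_same: "sample_upd (sample_swap j z) j a b = sample_upd z j a b"
  by (simp add: sample_swap_def sample_upd_upd_same)

lemma sample_swap_upd_same: "sample_swap j (sample_upd z j a b) = sample_upd z j b a"
  by (simp add: sample_swap_def sample_upd_upd_same) (simp add: sample_upd_def)

lemma samples_on_empty: "samples_on {} = {(\<lambda>_. False, \<lambda>_. False)}"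
  by (auto simp: samples_on_def)

lemma sample_upd_samples_on: "z \<in> samples_on (insert j I) \<Longrightarrow> sample_upd z j False False \<in> samples_on I"
  by (auto simp: samples_on_def sample_upd_def)

lemma samples_on_insert:
  assumes "j \<notin> I"
  shows "samples_on (insert j I) = (\<lambda>(z, a, b). sample_upd z j a b) ` (samples_on I \<times> UNIV)"
proof (intro equalityI subsetI)
  fix z assume "z \<in> samples_on (insert j I)"
  then have "(sample_upd z j False False, fst z j, snd z j) \<in> samples_on I \<times> UNIV"
    by (simp add: sample_upd_samples_on)
  then show "z \<in> (\<lambda>(z, a, b). sample_upd z j a b) ` (samples_on I \<times> UNIV)"
    by (rule rev_image_eqI) (simp add: sample_upd_upd_same sample_upd_self)
qed (auto simp: samples_on_def sample_upd_def)

lemma inj_on_sample_upd: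
  "j \<notin> I \<Longrightarrow> inj_on (\<lambda>(z, a, b). sample_upd z j a b) (samples_on I \<times> UNIV)"
  by (auto simp: inj_on_def samples_on_def sample_upd_def fun_eq_iff)

lemma finite_samples_on: "finite I \<Longrightarrow> finite (samples_on I)"
  by (induction I rule: finite_induct) (simp_all add: samples_on_empty samples_on_insert)

lemma sum_samples_on_insert:
  assumes "j \<notin> I"
  shows "(\<Sum>z\<in>samples_on (insert j I). F z) =
    (\<Sum>z\<in>samples_on I. F (sample_upd z j True True) + F (sample_upd z j False False)
                        + F (sample_upd z j True False) + F (sample_upd z j False True))"
proof -
  have "(\<Sum>z\<in>samples_on (insert j I). F z) =
        (\<Sum>(z, a, b)\<in>samples_on I \<times> UNIV. F (sample_upd z j a b))"
    unfolding samples_on_insert[OF assms]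
    by (subst sum.reindex[OF inj_on_sample_upd[OF assms]]) (simp add: case_prod_unfold)
  also have "\<dots> = (\<Sum>z\<in>samples_on I. \<Sum>(a, b)\<in>UNIV. F (sample_upd z j a b))"
    by (simp add: sum.cartesian_product split_def)
  also have "\<dots> = (\<Sum>z\<in>samples_on I. F (sample_upd z j True True) + F (sample_upd z j False False)
                        + F (sample_upd z j True False) + F (sample_upd z j False True))"
    by (simp add: UNIV_bool UNIV_Times_UNIV[symmetric] sum.cartesian_product add_ac)
  finally show ?thesis .
qed

lemma sample_space_eq_samples_on: "sample_space N = samples_on {..<N}"
  by (auto simp: sample_space_def samples_on_def not_less)

lemma finite_sample_space: "finite (sample_space N)"
  by (simp add: sample_space_eq_samples_on finite_samples_on)

lemma quadratic_vanishing_on_interval: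
  fixes A B C c e :: real
  assumes "e > 0" and vanish: "\<And>t. \<bar>t - c\<bar> < e \<Longrightarrow> t\<^sup>2 * A + (1 - t)\<^sup>2 * B + t * (1 - t) * C = 0"
  shows "A = 0 \<and> B = 0 \<and> C = 0"
proof -
  define coeff where "coeff = (\<lambda>i::nat. if i = 0 then B else if i = 1 then C - 2 * B else A + B - C)"
  have expand: "(\<Sum>i\<le>2. coeff i * t ^ i) = t\<^sup>2 * A + (1 - t)\<^sup>2 * B + t * (1 - t) * C" for t
    by (simp add: coeff_def numeral_2_eq_2 power2_eq_square algebra_simps)
  have "{c - e<..<c + e} \<subseteq> {t. (\<Sum>i\<le>2. coeff i * t ^ i) = 0}"
    using vanish by (auto simp: expand abs_less_iff)
  moreover have "infinite {c - e<..<c + e}"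
    using \<open>e > 0\<close> by simp
  ultimately have "\<forall>i\<le>2. coeff i = 0"
    using polyfun_roots_finite[of coeff] finite_subset by blast
  then have "coeff 0 = 0" "coeff 1 = 0" "coeff 2 = 0"
    by auto
  then show ?thesis
    by (auto simp: coeff_def)
qed

lemma indep_prob_sample_upd:
  assumes "finite I" and "j \<notin> I"
  shows "indep_prob (insert j I) p (sample_upd z j a b) = pair_prob (p j) 0 a b * indep_prob I p z"
proof -
  have "indep_prob I p (sample_upd z j a b) = indep_prob I p z"
    unfolding indep_prob_def using assms by (intro prod.cong) (auto simp: sample_upd_def)
  then show ?thesis
    using assms by (simp add: indep_prob_def sample_upd_def)
qed

lemma sum_indep_prob_insert:
  fixes f :: "sample \<Rightarrow> real" and p :: "nat \<Rightarrow> real"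
  assumes "finite I" and "j \<notin> I"
  defines "B \<equiv> \<lambda>a b. \<Sum>z\<in>samples_on I. f (sample_upd z j a b) * indep_prob I p z"
  shows "(\<Sum>z\<in>samples_on (insert j I). f z * indep_prob (insert j I) p z) =
    (p j)\<^sup>2 * B True True + (1 - p j)\<^sup>2 * B False False
    + p j * (1 - p j) * (B True False + B False True)"
proof -
  have "(\<Sum>z\<in>samples_on (insert j I). f z * indep_prob (insert j I) p z) =
    (\<Sum>z\<in>samples_on I. (p j)\<^sup>2 * (f (sample_upd z j True True) * indep_prob I p z)
      + (1 - p j)\<^sup>2 * (f (sample_upd z j False False) * indep_prob I p z)
      + p j * (1 - p j) * (f (sample_upd z j True False) * indep_prob I p z)
      + p j * (1 - p j) * (f (sample_upd z j False True) * indep_prob I p z))"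
    using assms by (simp add: sum_samples_on_insert indep_prob_sample_upd pair_prob_def algebra_simps)
  also have "\<dots> = (p j)\<^sup>2 * B True True + (1 - p j)\<^sup>2 * B False False
    + p j * (1 - p j) * (B True False + B False True)"
    by (simp add: B_def sum.distrib sum_distrib_left distrib_left)
  finally show ?thesis .
qed

lemma swap_invariant_vanishes_if_indep_sums_vanish:
  fixes f :: "sample \<Rightarrow> real"
  assumes "finite I" and "e > 0"
    and "\<And>j z. f (sample_swap j z) = f z"
    and "\<And>p. \<forall>i\<in>I. \<bar>p i - p0 i\<bar> < e \<Longrightarrow> (\<Sum>z\<in>samples_on I. f z * indep_prob I p z) = 0"
  shows "\<forall>z\<in>samples_on I. f z = 0"
  using assms
proof (induction I arbitrary: f rule: finite_induct)
  case empty
  then show ?case by (simp add: samples_on_empty indep_prob_def)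
next
  case (insert j I f)
  define B where "B a b p = (\<Sum>z\<in>samples_on I. f (sample_upd z j a b) * indep_prob I p z)" for a b p
  have B_vanish: "B a b p = 0" if p: "\<forall>i\<in>I. \<bar>p i - p0 i\<bar> < e" for a b p
  proof -
    have indep_upd: "indep_prob I (p(j := t)) = indep_prob I p" for t
      using insert.hyps by (auto simp: indep_prob_def fun_eq_iff intro!: prod.cong)
    have "t\<^sup>2 * B True True p + (1 - t)\<^sup>2 * B False False p
          + t * (1 - t) * (B True False p + B False True p) = 0" if "\<bar>t - p0 j\<bar> < e" for t
    proof -
      have "\<forall>i\<in>insert j I. \<bar>(p(j := t)) i - p0 i\<bar> < e"
        using p that by simp
      then have "(\<Sum>z\<in>samples_on (insert j I). f z * indep_prob (insert j I) (p(j := t)) z) = 0"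
        by (rule insert.prems(3))
      then show ?thesis
        using insert.hyps sum_indep_prob_insert[of I j f "p(j := t)"]
        by (simp add: B_def indep_upd)
    qed
    then have "B True True p = 0" "B False False p = 0" "B True False p + B False True p = 0"
      using quadratic_vanishing_on_interval[OF \<open>e > 0\<close>] by blast+
    \<comment> \<open>the quadratic only sees the sum of the two discordant terms; swap invariance splits it\<close>
    moreover have "B True False p = B False True p"
      unfolding B_def by (metis insert.prems(2) sample_swap_upd_same)
    ultimately show ?thesis
      by (cases a; cases b) simp_all
  qed
  have "\<forall>z\<in>samples_on I. f (sample_upd z j a b) = 0" for a b
  proof (rule insert.IH)
    show "f (sample_upd (sample_swap i z) j a b) = f (sample_upd z j a b)" for i z
      using insert.prems(2) by (metis sample_upd_swap_commute sample_upd_swap_same)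
  qed (use \<open>e > 0\<close> B_vanish[unfolded B_def] in auto)
  then show ?case
    by (metis sample_upd_samples_on sample_upd_upd_same sample_upd_self)
qed

definition disagreement_invariant :: "nat \<Rightarrow> (sample \<Rightarrow> 'a) \<Rightarrow> bool" where
  "disagreement_invariant N f \<longleftrightarrow> (\<forall>z z'. disagreement N z = disagreement N z' \<longrightarrow> f z = f z')"

lemma disagreement_invariantD:
  "disagreement_invariant N f \<Longrightarrow> disagreement N z = disagreement N z' \<Longrightarrow> f z = f z'"
  unfolding disagreement_invariant_def by blast

lemma disagreement_invariant_comp2:
  "disagreement_invariant N f \<Longrightarrow> disagreement_invariant N g \<Longrightarrow>
    disagreement_invariant N (\<lambda>z. h (f z) (g z))"
  unfolding disagreement_invariant_def by metis

lemma disagreement_sample_swap: "disagreement N (sample_swap j z) = disagreement N z"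
  by (auto simp: disagreement_def sample_swap_def sample_upd_def fun_eq_iff)

lemma disagreement_invariant_sample_swap:
  "disagreement_invariant N f \<Longrightarrow> f (sample_swap j z) = f z"
  by (erule disagreement_invariantD) (rule disagreement_sample_swap)

lemma disagreement_invariant_balanced_variant: "disagreement_invariant N (balanced_variant N S)"
  by (simp add: disagreement_invariant_def balanced_variant_def)

lemma pair_prob_eq_if_same_agreement:
  assumes "(if a = b then Some a else None) = (if a' = b' then Some a' else None)"
  shows "pair_prob p r a b = pair_prob p r a' b'"
  using assms by (cases a; cases b; cases a'; cases b') (auto simp: pair_prob_def)

lemma disagreement_invariant_cb_prob: "disagreement_invariant N (cb_prob N \<theta>)"
  unfolding disagreement_invariant_def cb_prob_def
proof (intro allI impI prod.cong[OF refl])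
  fix z z' i assume "disagreement N z = disagreement N z'" "i \<in> {..<N}"
  then have "disagreement N z i = disagreement N z' i" "i < N" by auto
  then show "pair_prob (fst \<theta> i) (snd \<theta> i) (fst z i) (snd z i) =
             pair_prob (fst \<theta> i) (snd \<theta> i) (fst z' i) (snd z' i)"
    by (intro pair_prob_eq_if_same_agreement) (simp add: disagreement_def)
qed

lemma balanced_if_disagreement_invariant:
  assumes "disagreement_invariant N F"
  shows "balanced N F"
  unfolding balanced_def
proof
  fix z assume "z \<in> sample_space N"
  let ?H = "fiber N (disagreement N z)"
  have "z \<in> ?H" and "finite ?H"
    using \<open>z \<in> sample_space N\<close> finite_sample_space by (simp_all add: fiber_def)
  then have "card ?H \<noteq> 0"
    by auto
  have "F z' = F z" if "z' \<in> ?H" for z'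
    using that by (intro disagreement_invariantD[OF assms]) (simp add: fiber_def)
  then have "(\<Sum>z'\<in>?H. F z') = card ?H * F z"
    by simp
  with \<open>card ?H \<noteq> 0\<close> show "F z = balanced_variant N F z"
    by (simp add: balanced_variant_def)
qed

lemma disagreement_invariant_vanishes_if_expectations_vanish:
  assumes "nondegenerate N \<Theta>" and "disagreement_invariant N f"
    and "\<And>\<theta>. \<theta> \<in> \<Theta> \<Longrightarrow> expect N \<theta> f = 0"
  shows "\<forall>z\<in>sample_space N. f z = 0"
proof -
  obtain p0 e where "e > 0"
    and box: "\<And>p. (\<forall>i\<ge>N. p i = 0) \<and> (\<forall>i<N. \<bar>p i - p0 i\<bar> < e) \<Longrightarrow> (p, \<lambda>_. 0) \<in> \<Theta>"
    using assms(1) unfolding nondegenerate_def by blast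
  have "(\<Sum>z\<in>samples_on {..<N}. f z * indep_prob {..<N} p z) = 0"
    if p: "\<forall>i\<in>{..<N}. \<bar>p i - p0 i\<bar> < e" for p
  proof -
    define p' where "p' i = (if i < N then p i else 0)" for i
    have "(p', \<lambda>_. 0) \<in> \<Theta>"
      using p by (intro box) (auto simp: p'_def)
    then have "expect N (p', \<lambda>_. 0) f = 0"
      by (rule assms(3))
    moreover have "cb_prob N (p', \<lambda>_. 0) = indep_prob {..<N} p"
      by (auto simp: cb_prob_def indep_prob_def p'_def fun_eq_iff intro!: prod.cong)
    ultimately show ?thesis
      by (simp add: expect_def sample_space_eq_samples_on)
  qed
  moreover have "f (sample_swap j z) = f z" for j z
    using assms(2) by (rule disagreement_invariant_sample_swap)
  ultimately have "\<forall>z\<in>samples_on {..<N}. f z = 0"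
    using swap_invariant_vanishes_if_indep_sums_vanish[OF finite_lessThan \<open>e > 0\<close>] by blast
  then show ?thesis
    by (simp add: sample_space_eq_samples_on)
qed

lemma sum_balanced_variant_mult:
  assumes "disagreement_invariant N \<phi>"
  shows "(\<Sum>z\<in>sample_space N. balanced_variant N T z * \<phi> z) = (\<Sum>z\<in>sample_space N. T z * \<phi> z)"
proof -
  have group_fibers: "(\<Sum>z\<in>sample_space N. F z) =
      (\<Sum>h\<in>disagreement N ` sample_space N. \<Sum>z\<in>fiber N h. F z)" for F :: "sample \<Rightarrow> real"
    using sum.group[OF finite_sample_space finite_imageI[OF finite_sample_space], where g = "disagreement N" and h = F]
    by (simp add: fiber_def)
  have "(\<Sum>z\<in>fiber N h. balanced_variant N T z * \<phi> z) = (\<Sum>z\<in>fiber N h. T z * \<phi> z)"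
    if h: "h \<in> disagreement N ` sample_space N" for h
  proof -
    obtain z0 where z0: "z0 \<in> fiber N h"
      using h unfolding fiber_def by blast
    moreover have "finite (fiber N h)"
      by (simp add: fiber_def finite_sample_space)
    ultimately have "card (fiber N h) \<noteq> 0"
      by auto
    moreover have "\<phi> z = \<phi> z0" "balanced_variant N T z = balanced_variant N T z0"
      if "z \<in> fiber N h" for z
    proof -
      have same: "disagreement N z = disagreement N z0"
        using that z0 by (simp add: fiber_def)
      show "\<phi> z = \<phi> z0"
        using assms same by (rule disagreement_invariantD)
      show "balanced_variant N T z = balanced_variant N T z0"
        using disagreement_invariant_balanced_variant same by (rule disagreement_invariantD)
    qed
    moreover have "balanced_variant N T z0 = (\<Sum>z\<in>fiber N h. T z) / card (fiber N h)"
      using z0 by (simp add: balanced_variant_def fiber_def)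
    ultimately show ?thesis
      by (simp add: sum_distrib_right)
  qed
  then show ?thesis
    by (simp add: group_fibers)
qed

lemma expect_balanced_variant: "expect N \<theta> (balanced_variant N T) = expect N \<theta> T"
  unfolding expect_def by (rule sum_balanced_variant_mult[OF disagreement_invariant_cb_prob])

lemma expect_cong:
  "(\<And>z. z \<in> sample_space N \<Longrightarrow> F z = G z) \<Longrightarrow> expect N \<theta> F = expect N \<theta> G"
  unfolding expect_def by (rule sum.cong) auto

lemma variance_cong:
  "(\<And>z. z \<in> sample_space N \<Longrightarrow> F z = G z) \<Longrightarrow> variance N \<theta> F = variance N \<theta> G"
  unfolding variance_def using expect_cong[of N F G \<theta>] by (intro expect_cong) auto

lemma expect_diff: "expect N \<theta> (\<lambda>z. F z - G z) = expect N \<theta> F - expect N \<theta> G"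
  unfolding expect_def by (simp add: sum_subtractf left_diff_distrib)

lemma expect_linear:
  "expect N \<theta> (\<lambda>z. a * F z + b * G z) = a * expect N \<theta> F + b * expect N \<theta> G"
  unfolding expect_def by (simp add: sum.distrib sum_distrib_left distrib_right mult.assoc)

lemma cb_prob_nonneg: "\<theta> \<in> param_space N \<Longrightarrow> cb_prob N \<theta> z \<ge> 0"
  unfolding cb_prob_def
  by (intro prod_nonneg) (auto simp: param_space_def pair_prob_def)

lemma variance_balanced_variant_le:
  assumes "\<theta> \<in> param_space N"
  shows "variance N \<theta> (balanced_variant N T) \<le> variance N \<theta> T"
proof -
  let ?V = "balanced_variant N T" and ?c = "cb_prob N \<theta>" and ?X = "sample_space N"
  define \<mu> where "\<mu> = expect N \<theta> T"
  have "disagreement_invariant N (\<lambda>z. (?V z - \<mu>) * ?c z)"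
    by (rule disagreement_invariant_comp2[OF disagreement_invariant_balanced_variant
          disagreement_invariant_cb_prob])
  then have "(\<Sum>z\<in>?X. ?V z * ((?V z - \<mu>) * ?c z)) = (\<Sum>z\<in>?X. T z * ((?V z - \<mu>) * ?c z))"
    by (rule sum_balanced_variant_mult)
  then have cross: "(\<Sum>z\<in>?X. (T z - ?V z) * ((?V z - \<mu>) * ?c z)) = 0"
    by (simp add: left_diff_distrib sum_subtractf)
  have "variance N \<theta> T = (\<Sum>z\<in>?X. (T z - \<mu>)\<^sup>2 * ?c z)"
    by (simp add: variance_def expect_def \<mu>_def)
  also have "\<dots> = (\<Sum>z\<in>?X. (T z - ?V z)\<^sup>2 * ?c z + (?V z - \<mu>)\<^sup>2 * ?c z
                            + 2 * ((T z - ?V z) * ((?V z - \<mu>) * ?c z)))"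
    by (rule sum.cong) (simp_all add: power2_eq_square algebra_simps)
  also have "\<dots> = (\<Sum>z\<in>?X. (T z - ?V z)\<^sup>2 * ?c z) + (\<Sum>z\<in>?X. (?V z - \<mu>)\<^sup>2 * ?c z)"
    by (simp add: sum.distrib cross flip: sum_distrib_left)
  also have "(\<Sum>z\<in>?X. (?V z - \<mu>)\<^sup>2 * ?c z) = variance N \<theta> ?V"
    unfolding variance_def expect_balanced_variant \<mu>_def by (simp add: expect_def)
  finally show ?thesis
    using cb_prob_nonneg[OF assms] by (simp add: sum_nonneg)
qed

lemma umvu_if_disagreement_invariant:
  assumes "\<Theta> \<subseteq> param_space N" and "nondegenerate N \<Theta>"
    and "disagreement_invariant N U" and "unbiased N \<Theta> U g"
  shows "umvu N \<Theta> U g"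
  unfolding umvu_def
proof (intro conjI allI impI ballI)
  fix T \<theta> assume T: "unbiased N \<Theta> T g" and "\<theta> \<in> \<Theta>"
  have "\<forall>z\<in>sample_space N. balanced_variant N T z - U z = 0"
  proof (rule disagreement_invariant_vanishes_if_expectations_vanish[OF assms(2)])
    show "disagreement_invariant N (\<lambda>z. balanced_variant N T z - U z)"
      using disagreement_invariant_balanced_variant assms(3) by (rule disagreement_invariant_comp2)
    show "expect N \<theta>' (\<lambda>z. balanced_variant N T z - U z) = 0" if "\<theta>' \<in> \<Theta>" for \<theta>'
      using that T assms(4) by (simp add: unbiased_def expect_diff expect_balanced_variant)
  qed
  then have "variance N \<theta> U = variance N \<theta> (balanced_variant N T)"
    by (intro variance_cong) simp
  also have "\<dots> \<le> variance N \<theta> T"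
    using \<open>\<theta> \<in> \<Theta>\<close> assms(1) by (intro variance_balanced_variant_le) auto
  finally show "variance N \<theta> U \<le> variance N \<theta> T" .
qed (fact assms(4))

theorem corollary1:
  fixes N :: nat and \<Theta> :: "param set" and S S' :: "sample \<Rightarrow> real"
    and g g' :: "param \<Rightarrow> real" and a b :: real
  assumes "N \<ge> 1"
    and "\<Theta> \<subseteq> param_space N"
    and "nondegenerate N \<Theta>"
    and "unbiased N \<Theta> S g"
    and "unbiased N \<Theta> S' g'"
  shows "umvu N \<Theta> (\<lambda>z. a * balanced_variant N S z + b * balanced_variant N S' z)
              (\<lambda>\<theta>. a * g \<theta> + b * g' \<theta>)
       \<and> balanced N (\<lambda>z. a * balanced_variant N S z + b * balanced_variant N S' z)
       \<and> balanced N (\<lambda>z. balanced_variant N S z * balanced_variant N S' z)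
       \<and> ((\<forall>z\<in>sample_space N. balanced_variant N S' z \<noteq> 0) \<longrightarrow>
            balanced N (\<lambda>z. balanced_variant N S z / balanced_variant N S' z))"
proof -
  have invariant: "disagreement_invariant N (\<lambda>z. h (balanced_variant N S z) (balanced_variant N S' z))"
    for h :: "real \<Rightarrow> real \<Rightarrow> real"
    by (rule disagreement_invariant_comp2[OF disagreement_invariant_balanced_variant
          disagreement_invariant_balanced_variant])
  have "unbiased N \<Theta> (\<lambda>z. a * balanced_variant N S z + b * balanced_variant N S' z)
          (\<lambda>\<theta>. a * g \<theta> + b * g' \<theta>)"
    using assms(4,5) by (simp add: unbiased_def expect_linear expect_balanced_variant)
  then show ?thesis
    using umvu_if_disagreement_invariant[OF assms(2,3) invariant[of "\<lambda>u v. a * u + b * v"]]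
      balanced_if_disagreement_invariant[OF invariant[of "\<lambda>u v. a * u + b * v"]]
      balanced_if_disagreement_invariant[OF invariant[of "(*)"]]
      balanced_if_disagreement_invariant[OF invariant[of "(/)"]]
    by blast
qed

end
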